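(* For every CEA $\mathcal{A}$ and every $\mathrm{SEL}\in\{\mathrm{STRICT},\mathrm{NEXT},\mathrm{LAST},\mathrm{MAX}\}$ there is a CEA $\mathcal{A}_{\mathrm{SEL}}$ such that $[\![\mathcal{A}_{\mathrm{SEL}}]\!](S)=[\![\mathrm{SEL}(\mathcal{A})]\!](S)$ for every stream $S$. Moreover, $\mathcal{A}_{\mathrm{STRICT}}$ has at most twice as many states and transitions as $\mathcal{A}$, and $\mathcal{A}_{\mathrm{NEXT}},\mathcal{A}_{\mathrm{LAST}},\mathcal{A}_{\mathrm{MAX}}$ have size at most exponential in $|\mathcal{A}|$.
   Context: Fix a schema $\mathcal{R}$ and let $\mathrm{tuples}(\mathcal{R})$ be the set of all its tuples. A stream is an infinite sequence $S=t_0t_1\ldots$ of tuples. A complex event is a non-empty finite subset of $\mathbb{N}$. Fix a set $\mathbf{U}$ of unary predicates (subsets of $\mathrm{tuples}(\mathcal{R})$), closed under union, intersection and complement, and containing $\mathrm{TRUE}=\mathrm{tuples}(\mathcal{R})$. A complex event automaton (CEA) is $\mathcal{A}=(Q,\Delta,I,F)$ with $Q$ a finite set of states, $I,F\subseteq Q$, and $\Delta\subseteq Q\times(\mathbf{U}\times\{\bullet,\circ\})\times Q$ finite. A run of $\mathcal{A}$ over $S$ reading $t_0\ldots t_n$ is $q_0\xrightarrow{P_0/m_0}q_1\cdots\xrightarrow{P_n/m_n}q_{n+1}$ with $q_0\in I$, $(q_i,(P_i,m_i),q_{i+1})\in\Delta$ and $t_i\in P_i$; accepting if $q_{n+1}\in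 F$. $\mathrm{match}(\rho)=\{i : m_i=\bullet\}$. $[\![\mathcal{A}]\!]_n(S)$ is the set of $\mathrm{match}(\rho)$ for accepting runs $\rho$ reading $t_0\ldots t_n$ with $n\in\mathrm{match}(\rho)$, and $[\![\mathcal{A}]\!](S)=\bigcup_n[\![\mathcal{A}]\!]_n(S)$. $|\mathcal{A}|=|Q|+|\Delta|$. Orders: $C_1\leq_{\mathrm{next}}C_2$ iff $C_1=C_2$ or $\min(C_1\triangle C_2)\in C_2$; $C_1\leq_{\mathrm{last}}C_2$ iff $C_1=C_2$ or $\max(C_1\triangle C_2)\in C_2$ ($\triangle$ = symmetric difference). Selection strategies: $C\in[\![\mathrm{STRICT}(\mathcal{A})]\!](S)$ iff $C\in[\![\mathcal{A}]\!](S)$ and $C$ is an interval $\{i,i+1,\dots,j\}$ of consecutive integers. $C\in[\![\mathrm{NEXT}(\mathcal{A})]\!](S)$ iff $C\in[\![\mathcal{A}]\!](S)$ and $C'\leq_{\mathrm{next}}C$ for every $C'\in[\![\mathcal{A}]\!](S)$ with $\max(C')=\max(C)$. $C\in[\![\mathrm{LAST}(\mathcal{A})]\!](S)$ iff $C\in[\![\mathcal{A}]\!](S)$ and $C'\leq_{\mathrm{last}}C$ for every $C'\in[\![\mathcal{A}]\!](S)$ with $\max(C')=\max(C)$. $C\in[\![\mathrm{MAX}(\mathcal{A})]\!](S)$ iff $C\in[\![\mathcal{A}]\!](S)$ and there is no $C'\in[\![\mathcal{A}]\!](S)$ with $\max(C')=\max(C)$ and $C\subsetneq C'$. *)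

theory Defs
  imports Main
begin

text \<open>A transition is (p, (P, m), q) where the boolean m = True encodes the marking
bullet and m = False encodes the marking circ.\<close>

datatype ('q, 't) cea =
  CEA (states: "'q set") (trans: "('q \<times> ('t set \<times> bool) \<times> 'q) set")
      (init: "'q set") (final: "'q set")

type_synonym 't stream = "nat \<Rightarrow> 't"

definition is_cea :: "'t set set \<Rightarrow> ('q, 't) cea \<Rightarrow> bool" where
  "is_cea U A \<longleftrightarrow> finite (states A) \<and> finite (trans A)
     \<and> init A \<subseteq> states A \<and> final A \<subseteq> states A
     \<and> trans A \<subseteq> states A \<times> (U \<times> UNIV) \<times> states A"

definition cea_size :: "('q, 't) cea \<Rightarrow> nat" where
  "cea_size A = card (states A) + card (trans A)"

definition accepting_run ::
  "('q, 't) cea \<Rightarrow> 't stream \<Rightarrow> nat \<Rightarrow> (nat \<Rightarrow> 'q) \<Rightarrow> (nat \<Rightarrow> 't set) \<Rightarrow> (nat \<Rightarrow> bool) \<Rightarrow> bool" where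
  "accepting_run A S n qs P m \<longleftrightarrow> qs 0 \<in> init A
     \<and> (\<forall>i\<le>n. (qs i, (P i, m i), qs (Suc i)) \<in> trans A \<and> S i \<in> P i)
     \<and> qs (Suc n) \<in> final A"

definition sem_at :: "('q, 't) cea \<Rightarrow> 't stream \<Rightarrow> nat \<Rightarrow> nat set set" where
  "sem_at A S n = {C. \<exists>qs P m. accepting_run A S n qs P m \<and> m n \<and> C = {i. i \<le> n \<and> m i}}"

definition sem :: "('q, 't) cea \<Rightarrow> 't stream \<Rightarrow> nat set set" where
  "sem A S = (\<Union>n. sem_at A S n)"

definition symdiff :: "nat set \<Rightarrow> nat set \<Rightarrow> nat set" where
  "symdiff C1 C2 = (C1 - C2) \<union> (C2 - C1)"

definition le_next :: "nat set \<Rightarrow> nat set \<Rightarrow> bool" where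
  "le_next C1 C2 \<longleftrightarrow> C1 = C2 \<or> Min (symdiff C1 C2) \<in> C2"

definition le_last :: "nat set \<Rightarrow> nat set \<Rightarrow> bool" where
  "le_last C1 C2 \<longleftrightarrow> C1 = C2 \<or> Max (symdiff C1 C2) \<in> C2"

datatype selection = Strict | Next | Last | Max_sel

fun sel_sem :: "selection \<Rightarrow> ('q, 't) cea \<Rightarrow> 't stream \<Rightarrow> nat set set" where
  "sel_sem Strict A S = {C \<in> sem A S. \<exists>i j. C = {i..j}}"
| "sel_sem Next A S = {C \<in> sem A S. \<forall>C'\<in>sem A S. Max C' = Max C \<longrightarrow> le_next C' C}"
| "sel_sem Last A S = {C \<in> sem A S. \<forall>C'\<in>sem A S. Max C' = Max C \<longrightarrow> le_last C' C}"
| "sel_sem Max_sel A S = {C \<in> sem A S. \<not> (\<exists>C'\<in>sem A S. Max C' = Max C \<and> C \<subset> C')}"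

end

theory Submission
  imports Defs
begin

text \<open>For STRICT it suffices to remember whether the previous position was marked and to
forbid an unmarked position after a marked one. For NEXT, LAST and MAX the new automaton
follows a run of A on a guessed marking and, by a subset construction, keeps track of all
competing runs of A, each together with a three-valued verdict that compares the
competitor's marking with the guessed one position by position. A guessed run is accepted
iff no competitor that also ends in a final state with its last position marked has won.
To make the subset construction deterministic on tuples, every transition also guesses
the exact set of transitions of A enabled by the current tuple; this set is described by
a Boolean combination of guards, so it lies in U. The states are triples of a state of A,
a bit and a set of configurations, which gives the exponential bound.\<close>

section \<open>Comparing markings\<close>

datatype verdict = Tie | Win | Lose

lemma UNIV_verdict: "(UNIV :: verdict set) = {Tie, Win, Lose}"
  using verdict.exhaust by auto

lemma card_UNIV_verdict: "card (UNIV :: verdict set) = 3"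
  by (simp add: UNIV_verdict)

instance verdict :: finite
  by standard (simp add: UNIV_verdict)

text \<open>Reading the markings b' of a competing run and b of the current run position by
position, the verdict records whether the competitor's complex event is already known
to be preferred (Win), known not to be (Lose), or undecided (Tie).\<close>

fun verdict_step :: "selection \<Rightarrow> verdict \<Rightarrow> bool \<Rightarrow> bool \<Rightarrow> verdict" where
  "verdict_step Next d b' b = (if d = Tie \<and> b' \<noteq> b then (if b' then Win else Lose) else d)"
| "verdict_step Last d b' b = (if b' = b then d else if b' then Win else Lose)"
| "verdict_step Max_sel d b' b =
     (if d = Lose \<or> (b \<and> \<not> b') then Lose else if b' \<and> \<not> b then Win else d)"
| "verdict_step Strict d b' b = d"

fun run_verdict :: "selection \<Rightarrow> (nat \<Rightarrow> bool) \<Rightarrow> (nat \<Rightarrow> bool) \<Rightarrow> nat \<Rightarrow> verdict" where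
  "run_verdict sel m' m 0 = Tie"
| "run_verdict sel m' m (Suc k) = verdict_step sel (run_verdict sel m' m k) (m' k) (m k)"

lemma run_verdict_cong: "(\<And>i. i < k \<Longrightarrow> m1 i = m2 i) \<Longrightarrow> run_verdict sel m1 m k = run_verdict sel m2 m k"
  by (induction k) auto

lemma run_verdict_Strict: "run_verdict Strict m' m k = Tie"
  by (induction k) simp_all

lemma run_verdict_Next:
  "(run_verdict Next m' m k = Tie \<longleftrightarrow> (\<forall>i<k. m' i = m i)) \<and>
   (run_verdict Next m' m k = Win \<longleftrightarrow> (\<exists>i<k. m' i \<and> \<not> m i \<and> (\<forall>j<i. m' j = m j)))"
  by (induction k) (auto simp: less_Suc_eq)

lemma run_verdict_Last:
  "(run_verdict Last m' m k = Tie \<longleftrightarrow> (\<forall>i<k. m' i = m i)) \<and>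
   (run_verdict Last m' m k = Win \<longleftrightarrow> (\<exists>i<k. m' i \<and> \<not> m i \<and> (\<forall>j. i < j \<and> j < k \<longrightarrow> m' j = m j)))"
  by (induction k) (auto simp: less_Suc_eq)

lemma run_verdict_Max_sel:
  "(run_verdict Max_sel m' m k = Lose \<longleftrightarrow> (\<exists>i<k. m i \<and> \<not> m' i)) \<and>
   (run_verdict Max_sel m' m k = Win \<longleftrightarrow> \<not> (\<exists>i<k. m i \<and> \<not> m' i) \<and> (\<exists>i<k. m' i \<and> \<not> m i))"
  by (induction k) (auto simp: less_Suc_eq)

fun beats :: "selection \<Rightarrow> nat set \<Rightarrow> nat set \<Rightarrow> bool" where
  "beats Next C' C \<longleftrightarrow> \<not> le_next C' C"
| "beats Last C' C \<longleftrightarrow> \<not> le_last C' C"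
| "beats Max_sel C' C \<longleftrightarrow> C \<subset> C'"
| "beats Strict C' C \<longleftrightarrow> False"

lemma ex_least_iff_Min:
  fixes D :: "'a::linorder set"
  assumes "finite D"
  shows "(\<exists>i\<in>D. P i \<and> (\<forall>j\<in>D. i \<le> j)) \<longleftrightarrow> D \<noteq> {} \<and> P (Min D)"
  using assms by (metis Min_eq_iff empty_iff)

lemma ex_greatest_iff_Max:
  fixes D :: "'a::linorder set"
  assumes "finite D"
  shows "(\<exists>i\<in>D. P i \<and> (\<forall>j\<in>D. j \<le> i)) \<longleftrightarrow> D \<noteq> {} \<and> P (Max D)"
  using assms by (metis Max_eq_iff empty_iff)

lemma symdiff_prefix_markings:
  "symdiff {i. i \<le> n \<and> m' i} {i. i \<le> n \<and> m i} = {i. i \<le> n \<and> m' i \<noteq> m i}"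
  unfolding symdiff_def by auto

lemma prefix_markings_eq_iff:
  "{i. i \<le> n \<and> m' i} = {i. i \<le> n \<and> m i} \<longleftrightarrow> {i. i \<le> n \<and> m' i \<noteq> m i} = {}"
  by auto

lemma run_verdict_Next_Win_iff:
  "run_verdict Next m' m (Suc n) = Win \<longleftrightarrow> \<not> le_next {i. i \<le> n \<and> m' i} {i. i \<le> n \<and> m i}"
proof -
  define D where "D = {i. i \<le> n \<and> m' i \<noteq> m i}"
  have "finite D" by (simp add: D_def)
  have mem_D: "i \<in> D \<Longrightarrow> i \<le> n \<and> (m' i \<longleftrightarrow> \<not> m i)" for i
    by (auto simp: D_def)
  have "run_verdict Next m' m (Suc n) = Win \<longleftrightarrow> (\<exists>i<Suc n. m' i \<and> \<not> m i \<and> (\<forall>j<i. m' j = m j))"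
    by (rule run_verdict_Next[THEN conjunct2])
  also have "\<dots> \<longleftrightarrow> (\<exists>i\<in>D. m' i \<and> (\<forall>j\<in>D. i \<le> j))"
  proof
    assume "\<exists>i<Suc n. m' i \<and> \<not> m i \<and> (\<forall>j<i. m' j = m j)"
    then obtain i where "i \<le> n" "m' i" "\<not> m i" "\<forall>j<i. m' j = m j"
      by (auto simp: less_Suc_eq_le)
    then show "\<exists>i\<in>D. m' i \<and> (\<forall>j\<in>D. i \<le> j)"
      by (auto intro!: bexI[of _ i] simp: D_def not_less[symmetric])
  next
    assume "\<exists>i\<in>D. m' i \<and> (\<forall>j\<in>D. i \<le> j)"
    then obtain i where i: "i \<in> D" "m' i" and least: "\<forall>j\<in>D. i \<le> j" by blast
    have "m' j = m j" if "j < i" for j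
    proof (rule ccontr)
      assume "m' j \<noteq> m j"
      then have "j \<in> D" using that i(1) by (simp add: D_def)
      with least that show False by auto
    qed
    then show "\<exists>i<Suc n. m' i \<and> \<not> m i \<and> (\<forall>j<i. m' j = m j)"
      using i by (auto intro!: exI[of _ i] simp: D_def)
  qed
  also have "\<dots> \<longleftrightarrow> D \<noteq> {} \<and> m' (Min D)"
    by (rule ex_least_iff_Min[OF \<open>finite D\<close>])
  also have "\<dots> \<longleftrightarrow> \<not> le_next {i. i \<le> n \<and> m' i} {i. i \<le> n \<and> m i}"
    using mem_D[OF Min_in[OF \<open>finite D\<close>]]
    unfolding le_next_def symdiff_prefix_markings prefix_markings_eq_iff D_def[symmetric] by auto
  finally show ?thesis .
qed

lemma run_verdict_Last_Win_iff:
  "run_verdict Last m' m (Suc n) = Win \<longleftrightarrow> \<not> le_last {i. i \<le> n \<and> m' i} {i. i \<le> n \<and> m i}"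
proof -
  define D where "D = {i. i \<le> n \<and> m' i \<noteq> m i}"
  have "finite D" by (simp add: D_def)
  have mem_D: "i \<in> D \<Longrightarrow> i \<le> n \<and> (m' i \<longleftrightarrow> \<not> m i)" for i
    by (auto simp: D_def)
  have "run_verdict Last m' m (Suc n) = Win \<longleftrightarrow>
      (\<exists>i<Suc n. m' i \<and> \<not> m i \<and> (\<forall>j. i < j \<and> j < Suc n \<longrightarrow> m' j = m j))"
    by (rule run_verdict_Last[THEN conjunct2])
  also have "\<dots> \<longleftrightarrow> (\<exists>i\<in>D. m' i \<and> (\<forall>j\<in>D. j \<le> i))"
  proof
    assume "\<exists>i<Suc n. m' i \<and> \<not> m i \<and> (\<forall>j. i < j \<and> j < Suc n \<longrightarrow> m' j = m j)"
    then obtain i where "i \<le> n" "m' i" "\<not> m i" "\<forall>j. i < j \<and> j \<le> n \<longrightarrow> m' j = m j"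
      by (auto simp: less_Suc_eq_le)
    then show "\<exists>i\<in>D. m' i \<and> (\<forall>j\<in>D. j \<le> i)"
      by (auto intro!: bexI[of _ i] simp: D_def not_less[symmetric])
  next
    assume "\<exists>i\<in>D. m' i \<and> (\<forall>j\<in>D. j \<le> i)"
    then obtain i where i: "i \<in> D" "m' i" and greatest: "\<forall>j\<in>D. j \<le> i" by blast
    have "m' j = m j" if "i < j" "j \<le> n" for j
    proof (rule ccontr)
      assume "m' j \<noteq> m j"
      then have "j \<in> D" using that by (simp add: D_def)
      with greatest that show False by auto
    qed
    then show "\<exists>i<Suc n. m' i \<and> \<not> m i \<and> (\<forall>j. i < j \<and> j < Suc n \<longrightarrow> m' j = m j)"
      using i by (auto intro!: exI[of _ i] simp: D_def less_Suc_eq_le)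
  qed
  also have "\<dots> \<longleftrightarrow> D \<noteq> {} \<and> m' (Max D)"
    by (rule ex_greatest_iff_Max[OF \<open>finite D\<close>])
  also have "\<dots> \<longleftrightarrow> \<not> le_last {i. i \<le> n \<and> m' i} {i. i \<le> n \<and> m i}"
    using mem_D[OF Max_in[OF \<open>finite D\<close>]]
    unfolding le_last_def symdiff_prefix_markings prefix_markings_eq_iff D_def[symmetric] by auto
  finally show ?thesis .
qed

lemma run_verdict_Max_sel_Win_iff:
  "run_verdict Max_sel m' m (Suc n) = Win \<longleftrightarrow> {i. i \<le> n \<and> m i} \<subset> {i. i \<le> n \<and> m' i}"
proof -
  have "run_verdict Max_sel m' m (Suc n) = Win \<longleftrightarrow>
      \<not> (\<exists>i\<le>n. m i \<and> \<not> m' i) \<and> (\<exists>i\<le>n. m' i \<and> \<not> m i)"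
    using run_verdict_Max_sel[THEN conjunct2, of m' m "Suc n"] unfolding less_Suc_eq_le .
  then show ?thesis by blast
qed

lemma run_verdict_Win_iff_beats:
  "run_verdict sel m' m (Suc n) = Win \<longleftrightarrow> beats sel {i. i \<le> n \<and> m' i} {i. i \<le> n \<and> m i}"
  by (cases sel)
    (simp_all only: beats.simps run_verdict_Next_Win_iff run_verdict_Last_Win_iff
      run_verdict_Max_sel_Win_iff run_verdict_Strict, simp)

lemma sem_atI: "accepting_run A S n qs P m \<Longrightarrow> m n \<Longrightarrow> {i. i \<le> n \<and> m i} \<in> sem_at A S n"
  unfolding sem_at_def by blast

lemma Max_of_mem_sem_at: "C \<in> sem_at A S n \<Longrightarrow> Max C = n"
  unfolding sem_at_def by (auto intro!: Max_eqI)

lemma mem_sem_at_iff: "C \<in> sem_at A S n \<longleftrightarrow> C \<in> sem A S \<and> Max C = n"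
  unfolding sem_def using Max_of_mem_sem_at by blast

lemma sel_sem_eq_unbeaten:
  "sel \<noteq> Strict \<Longrightarrow>
   sel_sem sel A S = {C \<in> sem A S. \<forall>C'\<in>sem A S. Max C' = Max C \<longrightarrow> \<not> beats sel C' C}"
  by (cases sel) auto

lemma sem_eq_unbeaten_if_sem_at:
  assumes "\<And>n. sem_at B S n = {C \<in> sem_at A S n. \<forall>C'\<in>sem_at A S n. \<not> R C' C}"
  shows "sem B S = {C \<in> sem A S. \<forall>C'\<in>sem A S. Max C' = Max C \<longrightarrow> \<not> R C' C}"
proof -
  have "C \<in> sem B S \<longleftrightarrow> C \<in> sem_at B S (Max C)" for C
    using mem_sem_at_iff by blast
  then show ?thesis
    unfolding set_eq_iff assms by (auto simp: mem_sem_at_iff)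
qed

section \<open>The selection automaton\<close>

definition guard :: "'q \<times> ('t set \<times> bool) \<times> 'q \<Rightarrow> 't set" where
  "guard tr = fst (fst (snd tr))"

definition enabled :: "('q \<times> ('t set \<times> bool) \<times> 'q) set \<Rightarrow> 't \<Rightarrow> ('q \<times> ('t set \<times> bool) \<times> 'q) set" where
  "enabled D t = {tr \<in> D. t \<in> guard tr}"

definition enabled_exactly :: "('q \<times> ('t set \<times> bool) \<times> 'q) set \<Rightarrow> ('q \<times> ('t set \<times> bool) \<times> 'q) set \<Rightarrow> 't set" where
  "enabled_exactly D T = \<Inter> (guard ` T \<union> uminus ` guard ` (D - T))"

lemma enabled_subset: "enabled D t \<subseteq> D"
  unfolding enabled_def by auto

lemma mem_enabled_exactly_iff: "T \<subseteq> D \<Longrightarrow> t \<in> enabled_exactly D T \<longleftrightarrow> enabled D t = T"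
  unfolding enabled_exactly_def enabled_def by auto

lemma Inter_mem_closed:
  assumes "UNIV \<in> U" and "\<And>P Q. P \<in> U \<Longrightarrow> Q \<in> U \<Longrightarrow> P \<inter> Q \<in> U"
    and "finite F" and "F \<subseteq> U"
  shows "\<Inter> F \<in> U"
  using assms(3,4) by (induction F rule: finite_induct) (auto intro: assms(1,2))

lemma enabled_exactly_mem_closed:
  assumes "UNIV \<in> U" and "\<And>P. P \<in> U \<Longrightarrow> - P \<in> U"
    and "\<And>P Q. P \<in> U \<Longrightarrow> Q \<in> U \<Longrightarrow> P \<inter> Q \<in> U"
    and "finite D" and "guard ` D \<subseteq> U" and "T \<subseteq> D"
  shows "enabled_exactly D T \<in> U"
  unfolding enabled_exactly_def
proof (rule Inter_mem_closed[OF assms(1,3)])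
  show "finite (guard ` T \<union> uminus ` guard ` (D - T))"
    using assms(4,6) finite_subset by blast
  show "guard ` T \<union> uminus ` guard ` (D - T) \<subseteq> U"
    using assms(2,5,6) by blast
qed

definition config_step ::
  "selection \<Rightarrow> ('q \<times> ('t set \<times> bool) \<times> 'q) set \<Rightarrow> bool \<Rightarrow> ('q \<times> verdict \<times> bool) set \<Rightarrow> ('q \<times> verdict \<times> bool) set" where
  "config_step sel T b X =
     {(p', verdict_step sel d b' b, b') | p d x P' b' p'. (p, d, x) \<in> X \<and> (p, (P', b'), p') \<in> T}"

text \<open>The last component of a configuration records whether the competing run marked its
last position: only then is its complex event a rival whose maximum is the current
position.\<close>

definition configs ::
  "selection \<Rightarrow> ('q, 't) cea \<Rightarrow> 't stream \<Rightarrow> (nat \<Rightarrow> bool) \<Rightarrow> nat \<Rightarrow> ('q \<times> verdict \<times> bool) set" where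
  "configs sel A S m k = {(qs k, run_verdict sel m' m k, k \<noteq> 0 \<and> m' (k - 1)) | qs P m'.
     qs 0 \<in> init A \<and> (\<forall>i<k. (qs i, (P i, m' i), qs (Suc i)) \<in> trans A \<and> S i \<in> P i)}"

lemma configsI:
  "qs 0 \<in> init A \<Longrightarrow> (\<forall>i<k. (qs i, (P i, m' i), qs (Suc i)) \<in> trans A \<and> S i \<in> P i)
   \<Longrightarrow> (qs k, run_verdict sel m' m k, k \<noteq> 0 \<and> m' (k - 1)) \<in> configs sel A S m k"
  unfolding configs_def by blast

lemma configs_0: "configs sel A S m 0 = init A \<times> {Tie} \<times> {False}"
  unfolding configs_def by fastforce

lemma configs_Suc:
  "configs sel A S m (Suc k) = config_step sel (enabled (trans A) (S k)) (m k) (configs sel A S m k)"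
proof (intro set_eqI iffI)
  fix c assume "c \<in> configs sel A S m (Suc k)"
  then obtain qs P m' where c: "c = (qs (Suc k), run_verdict sel m' m (Suc k), m' k)"
    and run: "qs 0 \<in> init A" "\<forall>i<Suc k. (qs i, (P i, m' i), qs (Suc i)) \<in> trans A \<and> S i \<in> P i"
    unfolding configs_def by auto
  have "(qs k, run_verdict sel m' m k, k \<noteq> 0 \<and> m' (k - 1)) \<in> configs sel A S m k"
    using run by (intro configsI[where P = P]) auto
  moreover have "(qs k, (P k, m' k), qs (Suc k)) \<in> enabled (trans A) (S k)"
    using run(2) unfolding enabled_def guard_def by auto
  ultimately show "c \<in> config_step sel (enabled (trans A) (S k)) (m k) (configs sel A S m k)"
    unfolding config_step_def c by fastforce
next
  fix c assume "c \<in> config_step sel (enabled (trans A) (S k)) (m k) (configs sel A S m k)"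
  then obtain p d x P' b' p' where c: "c = (p', verdict_step sel d b' (m k), b')"
    and "(p, d, x) \<in> configs sel A S m k" and tr: "(p, (P', b'), p') \<in> enabled (trans A) (S k)"
    unfolding config_step_def by blast
  then obtain qs P m' where "p = qs k" "d = run_verdict sel m' m k"
    and run: "qs 0 \<in> init A" "\<forall>i<k. (qs i, (P i, m' i), qs (Suc i)) \<in> trans A \<and> S i \<in> P i"
    unfolding configs_def by auto
  define qs2 where "qs2 = qs(Suc k := p')"
  define P2 where "P2 = P(k := P')"
  define m2 where "m2 = m'(k := b')"
  have "\<forall>i<Suc k. (qs2 i, (P2 i, m2 i), qs2 (Suc i)) \<in> trans A \<and> S i \<in> P2 i"
    using run(2) tr \<open>p = qs k\<close> by (auto simp: less_Suc_eq qs2_def P2_def m2_def enabled_def guard_def)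
  moreover have "qs2 0 \<in> init A"
    using run(1) by (simp add: qs2_def)
  moreover have "run_verdict sel m2 m k = d"
    unfolding \<open>d = run_verdict sel m' m k\<close> m2_def by (rule run_verdict_cong) simp
  ultimately have "(qs2 (Suc k), verdict_step sel d (m2 k) (m k), m2 k) \<in> configs sel A S m (Suc k)"
    using configsI[of qs2 A "Suc k" P2 m2 S sel m] by simp
  then show "c \<in> configs sel A S m (Suc k)"
    by (simp add: c qs2_def m2_def)
qed

lemma configs_subset: "is_cea U A \<Longrightarrow> configs sel A S m k \<subseteq> states A \<times> UNIV \<times> UNIV"
  by (induction k) (auto simp: configs_0 configs_Suc config_step_def is_cea_def enabled_def)

lemma Win_final_in_configs_iff:
  "(\<exists>p\<in>final A. (p, Win, True) \<in> configs sel A S m (Suc n))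
   \<longleftrightarrow> (\<exists>C'\<in>sem_at A S n. beats sel C' {i. i \<le> n \<and> m i})"
proof
  assume "\<exists>p\<in>final A. (p, Win, True) \<in> configs sel A S m (Suc n)"
  then obtain qs P m' where "accepting_run A S n qs P m'" "m' n" "run_verdict sel m' m (Suc n) = Win"
    unfolding configs_def accepting_run_def by (auto simp: less_Suc_eq_le simp del: run_verdict.simps)
  then show "\<exists>C'\<in>sem_at A S n. beats sel C' {i. i \<le> n \<and> m i}"
    unfolding sem_at_def run_verdict_Win_iff_beats by blast
next
  assume "\<exists>C'\<in>sem_at A S n. beats sel C' {i. i \<le> n \<and> m i}"
  then obtain qs P m' where "accepting_run A S n qs P m'" "m' n" "run_verdict sel m' m (Suc n) = Win"
    unfolding sem_at_def run_verdict_Win_iff_beats by blast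
  then show "\<exists>p\<in>final A. (p, Win, True) \<in> configs sel A S m (Suc n)"
    using configsI[of qs A "Suc n" P m' S sel m]
    unfolding accepting_run_def by (auto simp: less_Suc_eq_le simp del: run_verdict.simps)
qed

text \<open>A state (q, b, X) of the selection automaton records the state q of the current run
of A, whether its last position was marked, and the configurations X of all competing
runs. Each transition guesses the set T of transitions of A enabled by the current tuple;
the guard enabled_exactly (trans A) T makes the guess correct.\<close>

definition sel_cea :: "selection \<Rightarrow> ('q, 't) cea \<Rightarrow> ('q \<times> bool \<times> ('q \<times> verdict \<times> bool) set, 't) cea" where
  "sel_cea sel A = CEA
     (states A \<times> UNIV \<times> Pow (states A \<times> UNIV \<times> UNIV))
     ((\<lambda>((q, (P, b), q'), T, b0, X).
         ((q, b0, X), (P \<inter> enabled_exactly (trans A) T, b), (q', b, config_step sel T b X)))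
       ` (trans A \<times> Pow (trans A) \<times> UNIV \<times> Pow (states A \<times> UNIV \<times> UNIV)))
     ((\<lambda>q. (q, False, init A \<times> {Tie} \<times> {False})) ` init A)
     {(q, True, X) | q X. q \<in> final A \<and> X \<subseteq> states A \<times> UNIV \<times> UNIV
                         \<and> \<not> (\<exists>p\<in>final A. (p, Win, True) \<in> X)}"

lemma states_sel_cea: "states (sel_cea sel A) = states A \<times> UNIV \<times> Pow (states A \<times> UNIV \<times> UNIV)"
  by (simp add: sel_cea_def)

lemma sel_cea_trans_iff:
  "((q, b0, X), (P', b), s') \<in> trans (sel_cea sel A) \<longleftrightarrow>
   (\<exists>P q' T. P' = P \<inter> enabled_exactly (trans A) T \<and> s' = (q', b, config_step sel T b X)
      \<and> (q, (P, b), q') \<in> trans A \<and> T \<subseteq> trans A \<and> X \<subseteq> states A \<times> UNIV \<times> UNIV)"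
  (is "?lhs \<longleftrightarrow> ?rhs")
proof
  assume ?lhs
  then obtain p P b' p' T b0' X' where
    "(p, (P, b'), p') \<in> trans A" "T \<subseteq> trans A" "X' \<subseteq> states A \<times> UNIV \<times> UNIV"
    "((q, b0, X), (P', b), s') =
       ((p, b0', X'), (P \<inter> enabled_exactly (trans A) T, b'), (p', b', config_step sel T b' X'))"
    unfolding sel_cea_def by auto
  then show ?rhs by auto
next
  assume ?rhs
  then obtain P q' T where "P' = P \<inter> enabled_exactly (trans A) T" "s' = (q', b, config_step sel T b X)"
    "(q, (P, b), q') \<in> trans A" "T \<subseteq> trans A" "X \<subseteq> states A \<times> UNIV \<times> UNIV"
    by blast
  then show ?lhs
    unfolding sel_cea_def by (auto intro!: image_eqI[where x = "((q, (P, b), q'), T, b0, X)"])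
qed

lemma sel_cea_init_iff:
  "s \<in> init (sel_cea sel A) \<longleftrightarrow> (\<exists>q\<in>init A. s = (q, False, init A \<times> {Tie} \<times> {False}))"
  unfolding sel_cea_def by auto

lemma sel_cea_final_iff:
  "s \<in> final (sel_cea sel A) \<longleftrightarrow>
   (\<exists>q X. s = (q, True, X) \<and> q \<in> final A \<and> X \<subseteq> states A \<times> UNIV \<times> UNIV
          \<and> \<not> (\<exists>p\<in>final A. (p, Win, True) \<in> X))"
  unfolding sel_cea_def by auto

lemma sel_cea_trans_guardD:
  assumes "(s, (P', b), s') \<in> trans (sel_cea sel A)" and "t \<in> P'"
  shows "\<exists>P. (fst s, (P, b), fst s') \<in> trans A \<and> t \<in> P
           \<and> snd s' = (b, config_step sel (enabled (trans A) t) b (snd (snd s)))"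
proof -
  obtain q b0 X where s: "s = (q, b0, X)"
    by (metis prod_cases3)
  from assms(1) obtain P q' T where P': "P' = P \<inter> enabled_exactly (trans A) T"
    and s': "s' = (q', b, config_step sel T b X)"
    and tr: "(q, (P, b), q') \<in> trans A" and T: "T \<subseteq> trans A"
    unfolding s sel_cea_trans_iff by blast
  from P' assms(2) have "t \<in> enabled_exactly (trans A) T" by simp
  then have "T = enabled (trans A) t" using mem_enabled_exactly_iff[OF T] by simp
  with P' s' tr assms(2) show ?thesis unfolding s by auto
qed

lemma accepting_run_sel_ceaD:
  assumes run: "accepting_run (sel_cea sel A) S n qs' P' m"
  shows "\<exists>qs P. accepting_run A S n qs P m" and "m n"
    and "\<not> (\<exists>p\<in>final A. (p, Win, True) \<in> configs sel A S m (Suc n))"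
proof -
  have "\<forall>i. \<exists>P. i \<le> n \<longrightarrow> (fst (qs' i), (P, m i), fst (qs' (Suc i))) \<in> trans A \<and> S i \<in> P
      \<and> snd (qs' (Suc i)) = (m i, config_step sel (enabled (trans A) (S i)) (m i) (snd (snd (qs' i))))"
  proof (intro allI)
    fix i
    show "\<exists>P. i \<le> n \<longrightarrow> (fst (qs' i), (P, m i), fst (qs' (Suc i))) \<in> trans A \<and> S i \<in> P
      \<and> snd (qs' (Suc i)) = (m i, config_step sel (enabled (trans A) (S i)) (m i) (snd (snd (qs' i))))"
    proof (cases "i \<le> n")
      case True
      with run have "(qs' i, (P' i, m i), qs' (Suc i)) \<in> trans (sel_cea sel A)" "S i \<in> P' i"
        unfolding accepting_run_def by auto
      from sel_cea_trans_guardD[OF this] show ?thesis by simp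
    qed simp
  qed
  from choice[OF this] obtain P where P: "\<forall>i. i \<le> n \<longrightarrow> (fst (qs' i), (P i, m i), fst (qs' (Suc i))) \<in> trans A \<and> S i \<in> P i
      \<and> snd (qs' (Suc i)) = (m i, config_step sel (enabled (trans A) (S i)) (m i) (snd (snd (qs' i))))"
    by blast
  have configs: "snd (snd (qs' k)) = configs sel A S m k" if "k \<le> Suc n" for k
    using that
  proof (induction k)
    case 0
    then show ?case using run by (auto simp: accepting_run_def sel_cea_init_iff configs_0)
  next
    case (Suc k)
    then show ?case using P[rule_format, of k] by (simp add: configs_Suc)
  qed
  have "accepting_run A S n (\<lambda>k. fst (qs' k)) P m"
    using run P unfolding accepting_run_def sel_cea_init_iff sel_cea_final_iff by force
  then show "\<exists>qs P. accepting_run A S n qs P m" by blast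
  from run obtain q X where final: "qs' (Suc n) = (q, True, X)" "\<not> (\<exists>p\<in>final A. (p, Win, True) \<in> X)"
    unfolding accepting_run_def sel_cea_final_iff by blast
  then show "m n" using P[rule_format, of n] by simp
  show "\<not> (\<exists>p\<in>final A. (p, Win, True) \<in> configs sel A S m (Suc n))"
    using final configs[of "Suc n"] by simp
qed

lemma accepting_run_sel_ceaI:
  assumes "is_cea U A" and run: "accepting_run A S n qs P m" and "m n"
    and unbeaten: "\<not> (\<exists>p\<in>final A. (p, Win, True) \<in> configs sel A S m (Suc n))"
  shows "accepting_run (sel_cea sel A) S n (\<lambda>k. (qs k, k \<noteq> 0 \<and> m (k - 1), configs sel A S m k))
           (\<lambda>k. P k \<inter> enabled_exactly (trans A) (enabled (trans A) (S k))) m"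
  unfolding accepting_run_def
proof (intro conjI allI impI)
  fix i assume "i \<le> n"
  with run have "(qs i, (P i, m i), qs (Suc i)) \<in> trans A" "S i \<in> P i"
    unfolding accepting_run_def by auto
  then show "((qs i, i \<noteq> 0 \<and> m (i - 1), configs sel A S m i),
      (P i \<inter> enabled_exactly (trans A) (enabled (trans A) (S i)), m i),
      (qs (Suc i), Suc i \<noteq> 0 \<and> m (Suc i - 1), configs sel A S m (Suc i))) \<in> trans (sel_cea sel A)"
    unfolding sel_cea_trans_iff configs_Suc
    using enabled_subset[of "trans A" "S i"] configs_subset[OF assms(1), of sel S m i]
    by (intro exI[of _ "P i"] exI[of _ "qs (Suc i)"] exI[of _ "enabled (trans A) (S i)"]) simp
  show "S i \<in> P i \<inter> enabled_exactly (trans A) (enabled (trans A) (S i))"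
    using \<open>S i \<in> P i\<close> by (simp add: mem_enabled_exactly_iff[OF enabled_subset])
next
  show "(qs 0, 0 \<noteq> 0 \<and> m (0 - 1), configs sel A S m 0) \<in> init (sel_cea sel A)"
    using run by (simp add: accepting_run_def sel_cea_init_iff configs_0)
  show "(qs (Suc n), Suc n \<noteq> 0 \<and> m (Suc n - 1), configs sel A S m (Suc n)) \<in> final (sel_cea sel A)"
    unfolding sel_cea_final_iff
    using run \<open>m n\<close> unbeaten configs_subset[OF assms(1), of sel S m "Suc n"]
    by (simp add: accepting_run_def)
qed

lemma sem_at_sel_cea:
  assumes "is_cea U A"
  shows "sem_at (sel_cea sel A) S n = {C \<in> sem_at A S n. \<forall>C'\<in>sem_at A S n. \<not> beats sel C' C}"
proof (intro set_eqI iffI)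
  fix C assume "C \<in> sem_at (sel_cea sel A) S n"
  then obtain qs' P' m where run: "accepting_run (sel_cea sel A) S n qs' P' m"
    and C: "C = {i. i \<le> n \<and> m i}"
    unfolding sem_at_def by blast
  obtain qs P where "accepting_run A S n qs P m"
    using accepting_run_sel_ceaD(1)[OF run] by blast
  then have "C \<in> sem_at A S n"
    unfolding C using accepting_run_sel_ceaD(2)[OF run] by (rule sem_atI)
  moreover have "\<forall>C'\<in>sem_at A S n. \<not> beats sel C' C"
    using accepting_run_sel_ceaD(3)[OF run] unfolding C Win_final_in_configs_iff by blast
  ultimately show "C \<in> {C \<in> sem_at A S n. \<forall>C'\<in>sem_at A S n. \<not> beats sel C' C}"
    by blast
next
  fix C assume "C \<in> {C \<in> sem_at A S n. \<forall>C'\<in>sem_at A S n. \<not> beats sel C' C}"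
  then obtain qs P m where run: "accepting_run A S n qs P m" "m n" and C: "C = {i. i \<le> n \<and> m i}"
    and "\<forall>C'\<in>sem_at A S n. \<not> beats sel C' C"
    unfolding sem_at_def by blast
  then have "\<not> (\<exists>p\<in>final A. (p, Win, True) \<in> configs sel A S m (Suc n))"
    unfolding Win_final_in_configs_iff by blast
  from accepting_run_sel_ceaI[OF assms run this] \<open>m n\<close> show "C \<in> sem_at (sel_cea sel A) S n"
    unfolding C by (rule sem_atI)
qed

lemma sem_sel_cea:
  assumes "is_cea U A" and "sel \<noteq> Strict"
  shows "sem (sel_cea sel A) S = sel_sem sel A S"
  unfolding sel_sem_eq_unbeaten[OF assms(2)]
  by (rule sem_eq_unbeaten_if_sem_at) (rule sem_at_sel_cea[OF assms(1)])

lemma is_cea_sel_cea: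
  assumes "UNIV \<in> U" and "\<And>P. P \<in> U \<Longrightarrow> - P \<in> U"
    and "\<And>P Q. P \<in> U \<Longrightarrow> Q \<in> U \<Longrightarrow> P \<inter> Q \<in> U"
    and A: "is_cea U A"
  shows "is_cea U (sel_cea sel A)"
proof -
  have fin: "finite (states A)" "finite (trans A)"
    and trans_A: "trans A \<subseteq> states A \<times> (U \<times> UNIV) \<times> states A"
    using A unfolding is_cea_def by auto
  have "trans (sel_cea sel A) \<subseteq> states (sel_cea sel A) \<times> (U \<times> UNIV) \<times> states (sel_cea sel A)"
  proof
    fix tr assume tr_sel: "tr \<in> trans (sel_cea sel A)"
    obtain q b0 X P' b s' where tr: "tr = ((q, b0, X), (P', b), s')"
      by (metis prod.exhaust)
    from tr_sel have "((q, b0, X), (P', b), s') \<in> trans (sel_cea sel A)"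
      unfolding tr .
    then obtain P q' T where "P' = P \<inter> enabled_exactly (trans A) T"
      and "s' = (q', b, config_step sel T b X)" and tr_A: "(q, (P, b), q') \<in> trans A"
      and T: "T \<subseteq> trans A" and X: "X \<subseteq> states A \<times> UNIV \<times> UNIV"
      unfolding sel_cea_trans_iff by blast
    moreover have "enabled_exactly (trans A) T \<in> U"
      using trans_A T by (intro enabled_exactly_mem_closed[OF assms(1-3) fin(2)]) (auto simp: guard_def)
    moreover have "config_step sel T b X \<subseteq> states A \<times> UNIV \<times> UNIV"
      using T trans_A unfolding config_step_def by blast
    ultimately show "tr \<in> states (sel_cea sel A) \<times> (U \<times> UNIV) \<times> states (sel_cea sel A)"
      using tr_A trans_A X assms(3) unfolding tr states_sel_cea by auto
  qed
  moreover have "finite (states (sel_cea sel A))" "finite (trans (sel_cea sel A))"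
    using fin by (simp_all add: states_sel_cea sel_cea_def)
  moreover have "init (sel_cea sel A) \<subseteq> states (sel_cea sel A)"
    "final (sel_cea sel A) \<subseteq> states (sel_cea sel A)"
    using A unfolding is_cea_def states_sel_cea by (auto simp: sel_cea_init_iff sel_cea_final_iff)
  ultimately show ?thesis
    unfolding is_cea_def by blast
qed

lemma exp_size_bound:
  fixes q d :: nat
  assumes "q = 0 \<Longrightarrow> d = 0"
  shows "q * (2 * 2 ^ (q * 6)) + d * (2 ^ d * (2 * 2 ^ (q * 6))) \<le> 2 ^ (10 * (q + d))"
proof (cases "q = 0")
  case True
  then show ?thesis using assms by simp
next
  case False
  define N where "N = 10 * (q + d) - 1"
  have N: "Suc N = 10 * (q + d)" using False unfolding N_def by simp
  have "q * (2 * 2 ^ (q * 6)) \<le> 2 ^ q * (2 * 2 ^ (q * 6))" by simp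
  also have "\<dots> = 2 ^ (q + q * 6 + 1)" by (simp only: power_add power_one_right mult_ac)
  also have "\<dots> \<le> 2 ^ N" by (rule power_increasing) (use False N in auto)
  finally have states: "q * (2 * 2 ^ (q * 6)) \<le> 2 ^ N" .
  have "d * (2 ^ d * (2 * 2 ^ (q * 6))) \<le> 2 ^ d * (2 ^ d * (2 * 2 ^ (q * 6)))" by simp
  also have "\<dots> = 2 ^ (d + d + q * 6 + 1)" by (simp only: power_add power_one_right mult_ac)
  also have "\<dots> \<le> 2 ^ N" by (rule power_increasing) (use False N in auto)
  finally have trans: "d * (2 ^ d * (2 * 2 ^ (q * 6))) \<le> 2 ^ N" .
  have "(2::nat) ^ (10 * (q + d)) = 2 * 2 ^ N" unfolding N[symmetric] by simp
  with states trans show ?thesis by linarith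
qed

lemma cea_size_sel_cea:
  assumes "is_cea U A"
  shows "cea_size (sel_cea sel A) \<le> 2 ^ (10 * cea_size A)"
proof -
  have fin: "finite (states A)" "finite (trans A)"
    and trans_A: "trans A \<subseteq> states A \<times> (U \<times> UNIV) \<times> states A"
    using assms unfolding is_cea_def by auto
  let ?q = "card (states A)" and ?d = "card (trans A)"
  have "card (UNIV :: (verdict \<times> bool) set) = 6"
    using card_cartesian_product[of "UNIV :: verdict set" "UNIV :: bool set"]
    by (simp add: card_UNIV_verdict card_UNIV_bool)
  then have card_configs:
      "card (Pow (states A \<times> (UNIV :: verdict set) \<times> (UNIV :: bool set))) = 2 ^ (?q * 6)"
    using fin by (simp add: card_Pow card_cartesian_product)
  have "card (states (sel_cea sel A)) = ?q * (2 * 2 ^ (?q * 6))"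
    using fin card_configs by (simp add: states_sel_cea card_cartesian_product)
  moreover have "card (trans (sel_cea sel A)) \<le> ?d * (2 ^ ?d * (2 * 2 ^ (?q * 6)))"
  proof -
    have "card (trans (sel_cea sel A)) \<le>
        card (trans A \<times> Pow (trans A) \<times> (UNIV :: bool set) \<times> Pow (states A \<times> (UNIV :: verdict set) \<times> (UNIV :: bool set)))"
      unfolding sel_cea_def cea.sel by (rule card_image_le) (use fin in simp)
    also have "\<dots> = ?d * (2 ^ ?d * (2 * 2 ^ (?q * 6)))"
      using fin card_configs by (simp add: card_cartesian_product card_Pow)
    finally show ?thesis .
  qed
  moreover have "?d = 0" if "?q = 0"
  proof -
    have "states A = {}" using that fin(1) by simp
    with trans_A have "trans A = {}" by blast
    then show ?thesis by simp
  qed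
  ultimately show ?thesis
    unfolding cea_size_def using exp_size_bound[of ?q ?d] by linarith
qed

section \<open>Strict contiguity\<close>

lemma upward_closed_markings_iff_interval:
  assumes "m n"
  shows "(\<forall>k<n. m k \<longrightarrow> m (Suc k)) \<longleftrightarrow> (\<exists>i j. {k. k \<le> n \<and> m k} = {i..j})"
proof
  assume up: "\<forall>k<n. m k \<longrightarrow> m (Suc k)"
  define i where "i = (LEAST k. m k)"
  have "m k" if "i \<le> k" "k \<le> n" for k
    using that
  proof (induction k)
    case 0
    then show ?case using LeastI[of m n] assms by (simp add: i_def)
  next
    case (Suc k)
    show ?case
    proof (cases "i = Suc k")
      case True
      then show ?thesis using LeastI[of m n] assms by (simp add: i_def)
    next
      case False
      with Suc up show ?thesis by simp
    qed
  qed
  moreover have "i \<le> k" if "m k" for k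
    using that Least_le[of m k] by (simp add: i_def)
  ultimately have "{k. k \<le> n \<and> m k} = {i..n}" by auto
  then show "\<exists>i j. {k. k \<le> n \<and> m k} = {i..j}" by blast
next
  assume "\<exists>i j. {k. k \<le> n \<and> m k} = {i..j}"
  then obtain i j where ij: "{k. k \<le> n \<and> m k} = {i..j}" by blast
  have "n \<le> j" using assms ij by (metis atLeastAtMost_iff le_refl mem_Collect_eq)
  show "\<forall>k<n. m k \<longrightarrow> m (Suc k)"
  proof (intro allI impI)
    fix k assume "k < n" "m k"
    then have "i \<le> k" using ij by auto
    with \<open>k < n\<close> \<open>n \<le> j\<close> have "Suc k \<in> {i..j}" by simp
    then show "m (Suc k)" using ij by blast
  qed
qed

text \<open>The second state component records whether the previous position was marked; a
marked position may only be followed by a marked one.\<close>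

definition strict_cea :: "('q, 't) cea \<Rightarrow> ('q \<times> bool, 't) cea" where
  "strict_cea A = CEA (states A \<times> UNIV)
     ((\<lambda>((p, (P, b), q), x). ((p, x \<and> b), (P, b), (q, b))) ` (trans A \<times> UNIV))
     (init A \<times> {False}) (final A \<times> {True})"

lemma strict_cea_simps [simp]:
  "states (strict_cea A) = states A \<times> UNIV"
  "init (strict_cea A) = init A \<times> {False}"
  "final (strict_cea A) = final A \<times> {True}"
  by (simp_all add: strict_cea_def)

lemma strict_cea_trans_iff:
  "((p, x), (P, b), (q, y)) \<in> trans (strict_cea A) \<longleftrightarrow> (p, (P, b), q) \<in> trans A \<and> y = b \<and> (x \<longrightarrow> b)"
proof
  assume "((p, x), (P, b), (q, y)) \<in> trans (strict_cea A)"
  then obtain p' P' b' q' x' where "(p', (P', b'), q') \<in> trans A"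
    "((p, x), (P, b), (q, y)) = ((p', x' \<and> b'), (P', b'), (q', b'))"
    unfolding strict_cea_def by auto
  then show "(p, (P, b), q) \<in> trans A \<and> y = b \<and> (x \<longrightarrow> b)" by auto
next
  assume "(p, (P, b), q) \<in> trans A \<and> y = b \<and> (x \<longrightarrow> b)"
  then show "((p, x), (P, b), (q, y)) \<in> trans (strict_cea A)"
    unfolding strict_cea_def by (auto intro!: image_eqI[where x = "((p, (P, b), q), x)"])
qed

lemma sem_at_strict_cea: "sem_at (strict_cea A) S n = {C \<in> sem_at A S n. \<exists>i j. C = {i..j}}"
proof (intro set_eqI iffI)
  fix C assume "C \<in> sem_at (strict_cea A) S n"
  then obtain qs P m where run: "accepting_run (strict_cea A) S n qs P m" and "m n"
    and C: "C = {i. i \<le> n \<and> m i}"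
    unfolding sem_at_def by blast
  have step: "(fst (qs i), (P i, m i), fst (qs (Suc i))) \<in> trans A \<and> S i \<in> P i
      \<and> snd (qs (Suc i)) = m i \<and> (snd (qs i) \<longrightarrow> m i)" if "i \<le> n" for i
    using run that strict_cea_trans_iff[of "fst (qs i)" "snd (qs i)" "P i" "m i" "fst (qs (Suc i))"
        "snd (qs (Suc i))" A]
    unfolding accepting_run_def by simp
  have "accepting_run A S n (\<lambda>k. fst (qs k)) P m"
    using run step unfolding accepting_run_def by auto
  then have "C \<in> sem_at A S n"
    unfolding C using \<open>m n\<close> by (rule sem_atI)
  moreover have "\<forall>k<n. m k \<longrightarrow> m (Suc k)"
  proof (intro allI impI)
    fix k assume "k < n" "m k"
    then have "snd (qs (Suc k))" using step[of k] by simp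
    then show "m (Suc k)" using step[of "Suc k"] \<open>k < n\<close> by simp
  qed
  ultimately show "C \<in> {C \<in> sem_at A S n. \<exists>i j. C = {i..j}}"
    using upward_closed_markings_iff_interval[of m n, OF \<open>m n\<close>] C by blast
next
  fix C assume "C \<in> {C \<in> sem_at A S n. \<exists>i j. C = {i..j}}"
  then obtain qs P m where run: "accepting_run A S n qs P m" and "m n"
    and C: "C = {i. i \<le> n \<and> m i}" and "\<exists>i j. C = {i..j}"
    unfolding sem_at_def by blast
  then have up: "\<forall>k<n. m k \<longrightarrow> m (Suc k)"
    using upward_closed_markings_iff_interval[of m n, OF \<open>m n\<close>] by blast
  have "accepting_run (strict_cea A) S n (\<lambda>k. (qs k, k \<noteq> 0 \<and> m (k - 1))) P m"
    unfolding accepting_run_def strict_cea_trans_iff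
  proof (intro conjI allI impI)
    fix i assume "i \<le> n"
    with run show "(qs i, (P i, m i), qs (Suc i)) \<in> trans A" "S i \<in> P i"
      unfolding accepting_run_def by auto
    show "Suc i \<noteq> 0 \<and> m (Suc i - 1) \<longleftrightarrow> m i" by simp
    show "m i" if "i \<noteq> 0 \<and> m (i - 1)"
    proof -
      have "i - 1 < n" using that \<open>i \<le> n\<close> by auto
      with up that have "m (Suc (i - 1))" by blast
      with that show "m i" by simp
    qed
  qed (use run \<open>m n\<close> in \<open>auto simp: accepting_run_def\<close>)
  then show "C \<in> sem_at (strict_cea A) S n"
    unfolding C using \<open>m n\<close> by (rule sem_atI)
qed

lemma sem_strict_cea: "sem (strict_cea A) S = sel_sem Strict A S"
  unfolding sem_def sel_sem.simps sem_at_strict_cea by auto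

lemma is_cea_strict_cea:
  assumes "is_cea U A"
  shows "is_cea U (strict_cea A)"
proof -
  have "((p, x), (P, b), (q, y)) \<in> states (strict_cea A) \<times> (U \<times> UNIV) \<times> states (strict_cea A)"
    if "((p, x), (P, b), (q, y)) \<in> trans (strict_cea A)" for p x P b q y
    using that assms unfolding strict_cea_trans_iff is_cea_def by auto
  then have "trans (strict_cea A) \<subseteq> states (strict_cea A) \<times> (U \<times> UNIV) \<times> states (strict_cea A)"
    by auto
  moreover have "finite (trans (strict_cea A))"
    using assms unfolding is_cea_def by (simp add: strict_cea_def)
  ultimately show ?thesis
    using assms unfolding is_cea_def by auto
qed

lemma card_states_strict_cea: "is_cea U A \<Longrightarrow> card (states (strict_cea A)) = 2 * card (states A)"
  by (simp add: card_cartesian_product is_cea_def)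

lemma card_trans_strict_cea: "is_cea U A \<Longrightarrow> card (trans (strict_cea A)) \<le> 2 * card (trans A)"
proof -
  assume "is_cea U A"
  then have "card (trans (strict_cea A)) \<le> card (trans A \<times> (UNIV :: bool set))"
    unfolding strict_cea_def cea.sel is_cea_def by (intro card_image_le) simp
  then show ?thesis by (simp add: card_cartesian_product)
qed

section \<open>Renaming states\<close>

definition rename_states :: "('a \<Rightarrow> 'b) \<Rightarrow> ('a, 't) cea \<Rightarrow> ('b, 't) cea" where
  "rename_states f A = CEA (f ` states A) ((\<lambda>(p, l, q). (f p, l, f q)) ` trans A)
     (f ` init A) (f ` final A)"

lemma rename_states_simps [simp]:
  "states (rename_states f A) = f ` states A"
  "init (rename_states f A) = f ` init A"
  "final (rename_states f A) = f ` final A"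
  by (simp_all add: rename_states_def)

lemma rename_states_trans_iff:
  "(x, l, y) \<in> trans (rename_states f A) \<longleftrightarrow> (\<exists>p q. (p, l, q) \<in> trans A \<and> x = f p \<and> y = f q)"
  unfolding rename_states_def by force

lemma sem_at_rename_states:
  assumes A: "is_cea U A" and inj: "inj_on f (states A)"
  shows "sem_at (rename_states f A) S n = sem_at A S n"
proof (intro set_eqI iffI)
  fix C assume "C \<in> sem_at (rename_states f A) S n"
  then obtain qs P m where run: "accepting_run (rename_states f A) S n qs P m" "m n"
    and C: "C = {i. i \<le> n \<and> m i}"
    unfolding sem_at_def by blast
  have trans_A: "trans A \<subseteq> states A \<times> (U \<times> UNIV) \<times> states A"
    and "init A \<subseteq> states A" "final A \<subseteq> states A"
    using A unfolding is_cea_def by auto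
  define g where "g = inv_into (states A) f"
  have g: "p \<in> states A \<Longrightarrow> g (f p) = p" for p
    unfolding g_def using inj by simp
  have "accepting_run A S n (\<lambda>k. g (qs k)) P m"
    unfolding accepting_run_def
  proof (intro conjI allI impI)
    show "g (qs 0) \<in> init A" "g (qs (Suc n)) \<in> final A"
      using run(1) g \<open>init A \<subseteq> states A\<close> \<open>final A \<subseteq> states A\<close>
      unfolding accepting_run_def by auto
  next
    fix i assume "i \<le> n"
    with run(1) have "(qs i, (P i, m i), qs (Suc i)) \<in> trans (rename_states f A)" "S i \<in> P i"
      unfolding accepting_run_def by auto
    then obtain p q where "(p, (P i, m i), q) \<in> trans A" "qs i = f p" "qs (Suc i) = f q"
      unfolding rename_states_trans_iff by blast
    with trans_A g show "(g (qs i), (P i, m i), g (qs (Suc i))) \<in> trans A" by auto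
    show "S i \<in> P i" by fact
  qed
  then show "C \<in> sem_at A S n"
    unfolding C using run(2) by (rule sem_atI)
next
  fix C assume "C \<in> sem_at A S n"
  then obtain qs P m where run: "accepting_run A S n qs P m" "m n" and C: "C = {i. i \<le> n \<and> m i}"
    unfolding sem_at_def by blast
  then have "accepting_run (rename_states f A) S n (\<lambda>k. f (qs k)) P m"
    unfolding accepting_run_def rename_states_trans_iff by auto
  then show "C \<in> sem_at (rename_states f A) S n"
    unfolding C using run(2) by (rule sem_atI)
qed

lemma is_cea_rename_states:
  assumes "is_cea U A"
  shows "is_cea U (rename_states f A)"
proof -
  have "trans (rename_states f A) \<subseteq> f ` states A \<times> (U \<times> UNIV) \<times> f ` states A"
  proof
    fix tr assume tr_ren: "tr \<in> trans (rename_states f A)"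
    obtain x l y where tr: "tr = (x, l, y)"
      by (metis prod_cases3)
    from tr_ren have "(x, l, y) \<in> trans (rename_states f A)"
      unfolding tr .
    then obtain p q where "(p, l, q) \<in> trans A" "x = f p" "y = f q"
      unfolding rename_states_trans_iff by blast
    moreover from this have "p \<in> states A" "l \<in> U \<times> UNIV" "q \<in> states A"
      using assms unfolding is_cea_def by auto
    ultimately show "tr \<in> f ` states A \<times> (U \<times> UNIV) \<times> f ` states A"
      unfolding tr by simp
  qed
  moreover have "finite (trans (rename_states f A))"
    using assms unfolding is_cea_def by (simp add: rename_states_def)
  ultimately show ?thesis
    using assms unfolding is_cea_def by auto
qed

lemma card_trans_rename_states:
  assumes A: "is_cea U A" and inj: "inj_on f (states A)"
  shows "card (trans (rename_states f A)) = card (trans A)"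
proof -
  have "inj_on (\<lambda>(p, l, q). (f p, l, f q)) (trans A)"
  proof (rule inj_onI)
    fix tr1 tr2 assume "tr1 \<in> trans A" "tr2 \<in> trans A"
      and eq: "(\<lambda>(p, l, q). (f p, l, f q)) tr1 = (\<lambda>(p, l, q). (f p, l, f q)) tr2"
    moreover obtain p1 l1 q1 p2 l2 q2 where "tr1 = (p1, l1, q1)" "tr2 = (p2, l2, q2)"
      by (metis prod_cases3)
    ultimately have "p1 \<in> states A" "q1 \<in> states A" "p2 \<in> states A" "q2 \<in> states A"
      and "f p1 = f p2" "l1 = l2" "f q1 = f q2"
      using A unfolding is_cea_def by auto
    with inj \<open>tr1 = (p1, l1, q1)\<close> \<open>tr2 = (p2, l2, q2)\<close> show "tr1 = tr2"
      by (auto dest: inj_onD)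
  qed
  then show ?thesis
    unfolding rename_states_def by (simp add: card_image)
qed

lemma ex_nat_states_cea:
  fixes A :: "('q, 't) cea"
  assumes A: "is_cea U A"
  shows "\<exists>A' :: (nat, 't) cea. is_cea U A' \<and> (\<forall>S. sem A' S = sem A S)
     \<and> card (states A') = card (states A) \<and> card (trans A') = card (trans A)"
proof -
  have "finite (states A)"
    using A unfolding is_cea_def by simp
  from finite_imp_inj_to_nat_seg[OF this]
  obtain f :: "'q \<Rightarrow> nat" where inj: "inj_on f (states A)"
    by blast
  have "card (states (rename_states f A)) = card (states A)"
    using inj by (simp add: card_image)
  moreover have "\<forall>S. sem (rename_states f A) S = sem A S"
    unfolding sem_def by (simp add: sem_at_rename_states[OF A inj])
  moreover note is_cea_rename_states[OF A, of f] card_trans_rename_states[OF A inj]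
  ultimately show ?thesis
    by (intro exI[of _ "rename_states f A"]) simp
qed

lemma ex_nat_cea_for_selection:
  fixes A :: "('q, 't) cea"
  assumes "UNIV \<in> U" and closed: "\<And>P. P \<in> U \<Longrightarrow> - P \<in> U" "\<And>P Q. P \<in> U \<Longrightarrow> Q \<in> U \<Longrightarrow> P \<inter> Q \<in> U"
    and A: "is_cea U A"
  shows "\<exists>A'::(nat, 't) cea. is_cea U A' \<and> (\<forall>S. sem A' S = sel_sem sel A S)
      \<and> (sel = Strict \<longrightarrow> card (states A') \<le> 2 * card (states A) \<and> card (trans A') \<le> 2 * card (trans A))
      \<and> (sel \<noteq> Strict \<longrightarrow> cea_size A' \<le> 2 ^ (10 * cea_size A))"
proof (cases "sel = Strict")
  case True
  obtain A' :: "(nat, 't) cea" where A': "is_cea U A'" "\<forall>S. sem A' S = sem (strict_cea A) S"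
    "card (states A') = card (states (strict_cea A))" "card (trans A') = card (trans (strict_cea A))"
    using ex_nat_states_cea[OF is_cea_strict_cea[OF A]] by blast
  with True card_states_strict_cea[OF A] card_trans_strict_cea[OF A] show ?thesis
    by (intro exI[of _ A']) (simp add: sem_strict_cea del: sel_sem.simps)
next
  case False
  obtain A' :: "(nat, 't) cea" where A': "is_cea U A'" "\<forall>S. sem A' S = sem (sel_cea sel A) S"
    "card (states A') = card (states (sel_cea sel A))" "card (trans A') = card (trans (sel_cea sel A))"
    using ex_nat_states_cea[OF is_cea_sel_cea[OF assms(1) closed A]] by blast
  then have "cea_size A' \<le> 2 ^ (10 * cea_size A)"
    using cea_size_sel_cea[OF A, of sel] unfolding cea_size_def by simp
  with A' False show ?thesis
    by (intro exI[of _ A']) (simp add: sem_sel_cea[OF A False])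
qed

theorem theorem4:
  fixes U :: "'t set set"
  assumes "UNIV \<in> U"
    and "\<forall>P\<in>U. - P \<in> U"
    and "\<forall>P\<in>U. \<forall>Q\<in>U. P \<union> Q \<in> U \<and> P \<inter> Q \<in> U"
  shows "\<exists>c::nat. \<forall>(A::('q, 't) cea) sel. is_cea U A \<longrightarrow>
           (\<exists>A'::(nat, 't) cea. is_cea U A'
              \<and> (\<forall>S. sem A' S = sel_sem sel A S)
              \<and> (sel = Strict \<longrightarrow> card (states A') \<le> 2 * card (states A)
                                  \<and> card (trans A') \<le> 2 * card (trans A))
              \<and> (sel \<noteq> Strict \<longrightarrow> cea_size A' \<le> 2 ^ (c * cea_size A)))"
proof -
  have closed: "\<And>P. P \<in> U \<Longrightarrow> - P \<in> U" "\<And>P Q. P \<in> U \<Longrightarrow> Q \<in> U \<Longrightarrow> P \<inter> Q \<in> U"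
    using assms(2,3) by blast+
  show ?thesis
    by (intro exI[of _ 10] allI impI) (rule ex_nat_cea_for_selection[OF assms(1) closed])
qed

end
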